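(* Let $N\ge1$, $f_1,\dots,f_N,g_1,\dots,g_N\in\mathbb C$ with $S:=\sum_{n=1}^N|f_n||g_n|>0$, and let $P^{\max}>0$, $\sigma^2>0$, $L_0>0$, $d_{\mathrm t},d_{\mathrm r}>0$, $\alpha,\beta>0$. Set $\varrho_g^2=L_0d_{\mathrm t}^{-\alpha}$, $\varrho_f^2=L_0d_{\mathrm r}^{-\beta}$, $\sigma_v^2=\sigma^2$, $P_{\mathrm{BS\text{-}P}}^{\max}=P^{\max}$ and $P_{\mathrm{BS\text{-}A}}^{\max}=P_{\mathrm A}^{\max}=P^{\max}/2$. Define $$\gamma_{\mathrm{passive}}=\frac{P_{\mathrm{BS\text{-}P}}^{\max}S^2}{\sigma^2},\qquad \gamma_{\mathrm{active}}=\frac{P_{\mathrm{BS\text{-}A}}^{\max}P_{\mathrm A}^{\max}S^2}{N\left(P_{\mathrm A}^{\max}\sigma_v^2\varrho_f^2+P_{\mathrm{BS\text{-}A}}^{\max}\sigma^2\varrho_g^2+\sigma^2\sigma_v^2\right)}.$$ If $\gamma_{\mathrm{active}}\ge\gamma_{\mathrm{passive}}$, then $P^{\max}>4N\sigma^2$ and $$\frac{1}{d_{\mathrm t}^{-\alpha}+d_{\mathrm r}^{-\beta}}\ \ge\ \frac{2NP^{\max}L_0}{P^{\max}-4N\sigma^2}.$$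
   Context: Two single-user single-antenna systems aided by an $N$-element RIS; $g_n$ are BS–RIS and $f_n$ RIS–user channel coefficients, with far-field path losses $\varrho_g^2=L_0d_{\mathrm t}^{-\alpha}$ (BS–RIS distance $d_{\mathrm t}$, exponent $\alpha$) and $\varrho_f^2=L_0d_{\mathrm r}^{-\beta}$ (RIS–user distance $d_{\mathrm r}$, exponent $\beta$), $L_0$ the path loss at 1 m, total radiated power $P^{\max}$. $\gamma_{\mathrm{passive}}$ is the maximal SNR with a passive RIS; the exact maximal SNR with an active RIS (equal amplification, RIS noise power $\sigma_v^2$) is $\frac{P_{\mathrm{BS\text{-}A}}^{\max}P_{\mathrm A}^{\max}S^2}{P_{\mathrm A}^{\max}\sigma_v^2\sum_n|f_n|^2+\sigma^2(P_{\mathrm{BS\text{-}A}}^{\max}\sum_n|g_n|^2+N\sigma_v^2)}$, and $\gamma_{\mathrm{active}}$ above is this with $\frac1N\sum_n|f_n|^2$ and $\frac1N\sum_n|g_n|^2$ replaced by $\varrho_f^2$ and $\varrho_g^2$ (large-$N$ approximation). *)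

theory Defs
  imports Complex_Main
begin

definition gamma_passive :: "real \<Rightarrow> real \<Rightarrow> real \<Rightarrow> real" where
  "gamma_passive P_BSP S sigma2 = P_BSP * S^2 / sigma2"

text \<open>Large-N approximation of the maximal SNR with an active RIS.\<close>
definition gamma_active :: "nat \<Rightarrow> real \<Rightarrow> real \<Rightarrow> real \<Rightarrow> real \<Rightarrow> real \<Rightarrow> real \<Rightarrow> real \<Rightarrow> real" where
  "gamma_active N P_BSA P_A S sigma2 sigmav2 rho_f2 rho_g2 =
     P_BSA * P_A * S^2 /
     (real N * (P_A * sigmav2 * rho_f2 + P_BSA * sigma2 * rho_g2 + sigma2 * sigmav2))"

end

theory Submission
  imports Defs
begin

text \<open>Write \<open>x = d\<^sub>t powr -\<alpha> + d\<^sub>r powr -\<beta>\<close>. With equal power splitting and equal noise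
  powers, the active-RIS SNR is the passive-RIS SNR times \<open>P / (2 N (P L\<^sub>0 x + 2 \<sigma>\<^sup>2))\<close>, so the
  active RIS wins exactly when \<open>2 N P L\<^sub>0 x \<le> P - 4 N \<sigma>\<^sup>2\<close>. The left-hand side is positive,
  which forces \<open>P > 4 N \<sigma>\<^sup>2\<close>, and dividing by it gives the distance bound.\<close>

lemma gamma_active_equal_split:
  "gamma_active N (P/2) (P/2) S s s (L0 * b) (L0 * a) =
     P^2 * S^2 / (2 * real N * s * (P * L0 * (a + b) + 2 * s))"
  unfolding gamma_active_def by (simp add: field_simps power2_eq_square)

lemma gamma_active_equal_split_ge_gamma_passive_iff:
  fixes P S s L0 a b :: real
  assumes "N > 0" "P > 0" "S \<noteq> 0" "s > 0" "L0 * (a + b) \<ge> 0"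
  shows "gamma_active N (P/2) (P/2) S s s (L0 * b) (L0 * a) \<ge> gamma_passive P S s \<longleftrightarrow>
         2 * real N * P * L0 * (a + b) \<le> P - 4 * real N * s"
proof -
  define D where "D = P * L0 * (a + b) + 2 * s"
  have "P * (L0 * (a + b)) \<ge> 0" using assms by simp
  then have D_pos: "D > 0" using \<open>s > 0\<close> by (simp add: D_def)
  have "gamma_active N (P/2) (P/2) S s s (L0 * b) (L0 * a) =
        gamma_passive P S s * (P / (2 * real N * D))"
    by (simp add: gamma_active_equal_split gamma_passive_def D_def power2_eq_square mult_ac)
  moreover have "gamma_passive P S s > 0"
    using assms by (simp add: gamma_passive_def)
  moreover have "1 \<le> P / (2 * real N * D) \<longleftrightarrow> 2 * real N * D \<le> P"
    using assms D_pos by (simp add: le_divide_eq)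
  ultimately have "gamma_active N (P/2) (P/2) S s s (L0 * b) (L0 * a) \<ge> gamma_passive P S s \<longleftrightarrow>
        2 * real N * D \<le> P"
    by (metis mult.right_neutral mult_le_cancel_left_pos)
  then show ?thesis by (simp add: D_def algebra_simps)
qed

theorem lemma4:
  fixes N :: nat and f g :: "nat \<Rightarrow> complex"
    and Pmax sigma2 L0 dt dr alpha beta :: real
  assumes "N \<ge> 1"
    and "(\<Sum>n=1..N. cmod (f n) * cmod (g n)) > 0"
    and "Pmax > 0" "sigma2 > 0" "L0 > 0" "dt > 0" "dr > 0" "alpha > 0" "beta > 0"
    and "gamma_active N (Pmax/2) (Pmax/2) (\<Sum>n=1..N. cmod (f n) * cmod (g n)) sigma2 sigma2
           (L0 * dr powr (-beta)) (L0 * dt powr (-alpha))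
         \<ge> gamma_passive Pmax (\<Sum>n=1..N. cmod (f n) * cmod (g n)) sigma2"
  shows "Pmax > 4 * real N * sigma2 \<and>
         1 / (dt powr (-alpha) + dr powr (-beta)) \<ge> 2 * real N * Pmax * L0 / (Pmax - 4 * real N * sigma2)"
proof -
  define x where "x = dt powr (-alpha) + dr powr (-beta)"
  have x_pos: "x > 0" using assms by (simp add: x_def add_pos_pos)
  have bound: "2 * real N * Pmax * L0 * x \<le> Pmax - 4 * real N * sigma2"
    using gamma_active_equal_split_ge_gamma_passive_iff[of N Pmax _ sigma2 L0
        "dt powr (-alpha)" "dr powr (-beta)"] assms x_pos
    by (simp add: x_def)
  have "2 * real N * Pmax * L0 * x > 0" using assms x_pos by simp
  with bound have margin_pos: "Pmax - 4 * real N * sigma2 > 0" by linarith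
  with bound x_pos have "2 * real N * Pmax * L0 / (Pmax - 4 * real N * sigma2) \<le> 1 / x"
    by (simp add: divide_simps mult.commute)
  with margin_pos show ?thesis by (simp add: x_def)
qed

end
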